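(* Let $f:\mathbb{R}\to(0,\infty)$ be $C^4$, unimodal with maximum at $\mu$, of the form $f=e^{-H}$ with $H$ regularly varying (there is $\alpha>0$ with $H(tx)/H(t)\to x^\alpha$ as $|t|\to\infty$ for all $x>0$), and with $|(\log f)''''|<M$ for some $M>0$. For $d\ge1$ let $f_d(x)=\prod_{i=1}^d f(x_i)$, fix $\beta>0$, $\ell>0$, set $\epsilon=\ell d^{-1/2}$, $\beta'=\beta+\epsilon$, and let $x\sim f_d^\beta/\int f_d^\beta$ and $y\sim f_d^{\beta'}/\int f_d^{\beta'}$ be independent. Let $$B=\log\left(\frac{f_d^{\beta'}(g(x,\beta,\beta'))\,f_d^{\beta}(g(y,\beta',\beta))}{f_d^{\beta'}(y)\,f_d^{\beta}(x)}\right).$$ Then $$B=\epsilon\sum_{i=1}^d\Big[h(x_i)-h(y_i)+\tfrac12\big(k(y_i)-k(x_i)\big)\Big]+\frac{\epsilon^2}{8\beta}\sum_{i=1}^d\Big[r(x_i)-k(x_i)+r(y_i)-k(y_i)\Big]+(T_x+T_y),$$ where $T_x$ is a function of $x$, $T_y$ is a function of $y$, and $T_x\to0$ and $T_y\to0$ in probability as $d\to\infty$.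
   Context: $g(z,a,b)\in\mathbb{R}^d$ is defined coordinatewise by $g(z,a,b)_i=(a/b)^{1/2}(z_i-\mu)+\mu$. $h=\log f$, $k(x)=(x-\mu)h'(x)$, $r(x)=(x-\mu)^2h''(x)$. *)

theory Defs
  imports "HOL-Probability.Probability"
begin

definition C4 :: "(real \<Rightarrow> real) \<Rightarrow> bool" where
  "C4 f \<longleftrightarrow> (\<forall>n<4. \<forall>x. ((deriv ^^ n) f has_real_derivative (deriv ^^ Suc n) f x) (at x))
            \<and> continuous_on UNIV ((deriv ^^ 4) f)"

definition unimodal_at :: "(real \<Rightarrow> real) \<Rightarrow> real \<Rightarrow> bool" where
  "unimodal_at f mu \<longleftrightarrow> (\<forall>a b. a \<le> b \<and> b \<le> mu \<longrightarrow> f a \<le> f b)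
                      \<and> (\<forall>a b. mu \<le> a \<and> a \<le> b \<longrightarrow> f b \<le> f a)"

definition regularly_varying :: "(real \<Rightarrow> real) \<Rightarrow> bool" where
  "regularly_varying H \<longleftrightarrow> (\<exists>\<alpha>>0. \<forall>x>0. ((\<lambda>t. H (t * x) / H t) \<longlongrightarrow> x powr \<alpha>) at_infinity)"

text \<open>Product density f_d(x) = prod_{i<d} f(x_i), vectors in R^d as functions on {..<d}.\<close>
definition fd :: "(real \<Rightarrow> real) \<Rightarrow> nat \<Rightarrow> (nat \<Rightarrow> real) \<Rightarrow> real" where
  "fd f d x = (\<Prod>i<d. f (x i))"

definition leb :: "nat \<Rightarrow> (nat \<Rightarrow> real) measure" where
  "leb d = PiM {..<d} (\<lambda>_. lborel)"

definition tempered :: "(real \<Rightarrow> real) \<Rightarrow> nat \<Rightarrow> real \<Rightarrow> (nat \<Rightarrow> real) measure" where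
  "tempered f d \<beta> = density (leb d)
      (\<lambda>x. ennreal (fd f d x powr \<beta> / (\<integral>z. fd f d z powr \<beta> \<partial>leb d)))"

definition gmap :: "real \<Rightarrow> (nat \<Rightarrow> real) \<Rightarrow> real \<Rightarrow> real \<Rightarrow> (nat \<Rightarrow> real)" where
  "gmap mu z a b = (\<lambda>i. sqrt (a / b) * (z i - mu) + mu)"

definition hfun :: "(real \<Rightarrow> real) \<Rightarrow> real \<Rightarrow> real" where
  "hfun f x = ln (f x)"

definition kfun :: "(real \<Rightarrow> real) \<Rightarrow> real \<Rightarrow> real \<Rightarrow> real" where
  "kfun f mu x = (x - mu) * deriv (hfun f) x"

definition rfun :: "(real \<Rightarrow> real) \<Rightarrow> real \<Rightarrow> real \<Rightarrow> real" where
  "rfun f mu x = (x - mu)^2 * deriv (deriv (hfun f)) x"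

definition Bratio :: "(real \<Rightarrow> real) \<Rightarrow> real \<Rightarrow> nat \<Rightarrow> real \<Rightarrow> real \<Rightarrow> (nat \<Rightarrow> real) \<Rightarrow> (nat \<Rightarrow> real) \<Rightarrow> real" where
  "Bratio f mu d \<beta> \<beta>' x y = ln ((fd f d (gmap mu x \<beta> \<beta>') powr \<beta>' * fd f d (gmap mu y \<beta>' \<beta>) powr \<beta>)
                              / (fd f d y powr \<beta>' * fd f d x powr \<beta>))"

end

theory Submission
  imports Defs "HOL-Real_Asymp.Real_Asymp"
begin

(* Since f > 0, B splits into a sum over coordinates of terms q (h (mu + s (t - mu)) - h t) in x_i
   alone and in y_i alone, with (q, s) = (beta', sqrt (beta / beta')) for x and
   (beta, sqrt (beta' / beta)) for y. A fourth-order Taylor expansion of h about t turns each term into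
   the stated first- and second-order parts plus a remainder bounded by c(eps) (1 + |t - mu|)^4: the
   bound on the fourth derivative of h controls every (t - mu)^j h^(j)(t) by (1 + |t - mu|)^4, and
   c(eps) = o(eps^2) because the expansion of s - 1 in eps is matched to second order. As
   eps^2 = l^2 / d, the d remainders have total mean d o(1/d) E (1 + |t - mu|)^4 -> 0, and Markov's
   inequality gives convergence in probability. The weighted moments stay bounded uniformly in the
   inverse temperature, since regular variation of -log f forces f^b to decay faster than any power. *)

section \<open>Iterated derivatives\<close>

definition has_derivs_upto :: "nat \<Rightarrow> (real \<Rightarrow> real) \<Rightarrow> bool" where
  "has_derivs_upto n u \<longleftrightarrow>
     (\<forall>m<n. \<forall>x. ((deriv ^^ m) u has_real_derivative (deriv ^^ Suc m) u x) (at x))"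

lemma has_derivs_upto_0 [simp]: "has_derivs_upto 0 u"
  by (simp add: has_derivs_upto_def)

lemma has_derivs_upto_Suc:
  "has_derivs_upto (Suc n) u \<longleftrightarrow>
     (\<forall>x. (u has_real_derivative deriv u x) (at x)) \<and> has_derivs_upto n (deriv u)"
  unfolding has_derivs_upto_def less_Suc_eq_0_disj
  by (auto simp: funpow_Suc_right simp del: funpow.simps)

lemma has_derivs_upto_mono: "has_derivs_upto n u \<Longrightarrow> m \<le> n \<Longrightarrow> has_derivs_upto m u"
  by (auto simp: has_derivs_upto_def)

lemma has_derivs_upto_funpow:
  assumes "has_derivs_upto n u" "j \<le> n"
  shows "has_derivs_upto (n - j) ((deriv ^^ j) u)"
proof -
  have "(deriv ^^ m) ((deriv ^^ j) u) = (deriv ^^ (m + j)) u" for m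
    by (simp add: funpow_add)
  then show ?thesis
    using assms unfolding has_derivs_upto_def by (metis add_Suc less_diff_conv)
qed

lemma has_derivs_upto_add:
  "has_derivs_upto n u \<Longrightarrow> has_derivs_upto n v \<Longrightarrow> has_derivs_upto n (\<lambda>x. u x + v x)"
proof (induction n arbitrary: u v)
  case (Suc n)
  then have du: "\<And>x. (u has_real_derivative deriv u x) (at x)"
    and dv: "\<And>x. (v has_real_derivative deriv v x) (at x)"
    by (simp_all add: has_derivs_upto_Suc)
  have "deriv (\<lambda>x. u x + v x) = (\<lambda>x. deriv u x + deriv v x)"
    using du dv by (intro ext DERIV_imp_deriv derivative_intros)
  then show ?case
    using Suc du dv by (auto simp: has_derivs_upto_Suc intro!: derivative_eq_intros)
qed simp

lemma has_derivs_upto_diff: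
  "has_derivs_upto n u \<Longrightarrow> has_derivs_upto n v \<Longrightarrow> has_derivs_upto n (\<lambda>x. u x - v x)"
proof (induction n arbitrary: u v)
  case (Suc n)
  then have du: "\<And>x. (u has_real_derivative deriv u x) (at x)"
    and dv: "\<And>x. (v has_real_derivative deriv v x) (at x)"
    by (simp_all add: has_derivs_upto_Suc)
  have "deriv (\<lambda>x. u x - v x) = (\<lambda>x. deriv u x - deriv v x)"
    using du dv by (intro ext DERIV_imp_deriv derivative_intros)
  then show ?case
    using Suc du dv by (auto simp: has_derivs_upto_Suc intro!: derivative_eq_intros)
qed simp

lemma has_derivs_upto_mult:
  "has_derivs_upto n u \<Longrightarrow> has_derivs_upto n v \<Longrightarrow> has_derivs_upto n (\<lambda>x. u x * v x)"
proof (induction n arbitrary: u v)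
  case (Suc n)
  then have du: "\<And>x. (u has_real_derivative deriv u x) (at x)"
    and dv: "\<And>x. (v has_real_derivative deriv v x) (at x)"
    and ddu: "has_derivs_upto n (deriv u)" and ddv: "has_derivs_upto n (deriv v)"
    by (simp_all add: has_derivs_upto_Suc)
  have uv: "has_derivs_upto n u" "has_derivs_upto n v"
    using Suc.prems by (auto intro: has_derivs_upto_mono)
  have "deriv (\<lambda>x. u x * v x) = (\<lambda>x. deriv u x * v x + u x * deriv v x)"
    using du dv by (intro ext DERIV_imp_deriv) (auto intro!: derivative_eq_intros)
  moreover have "has_derivs_upto n (\<lambda>x. deriv u x * v x + u x * deriv v x)"
    using Suc.IH ddu ddv uv by (intro has_derivs_upto_add)
  ultimately show ?case
    using du dv by (auto simp: has_derivs_upto_Suc intro!: derivative_eq_intros)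
qed simp

lemma has_derivs_upto_divide:
  "has_derivs_upto n u \<Longrightarrow> has_derivs_upto n v \<Longrightarrow> (\<And>x. v x \<noteq> 0) \<Longrightarrow>
     has_derivs_upto n (\<lambda>x. u x / v x)"
proof (induction n arbitrary: u v)
  case (Suc n)
  then have du: "\<And>x. (u has_real_derivative deriv u x) (at x)"
    and dv: "\<And>x. (v has_real_derivative deriv v x) (at x)"
    and ddu: "has_derivs_upto n (deriv u)" and ddv: "has_derivs_upto n (deriv v)"
    by (simp_all add: has_derivs_upto_Suc)
  have uv: "has_derivs_upto n u" "has_derivs_upto n v"
    using Suc.prems by (auto intro: has_derivs_upto_mono)
  have "deriv (\<lambda>x. u x / v x) = (\<lambda>x. (deriv u x * v x - u x * deriv v x) / (v x * v x))"
    using du dv Suc.prems(3)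
    by (intro ext DERIV_imp_deriv) (auto intro!: derivative_eq_intros simp: field_simps power2_eq_square)
  moreover have "has_derivs_upto n (\<lambda>x. (deriv u x * v x - u x * deriv v x) / (v x * v x))"
    using Suc ddu ddv uv by (intro Suc.IH has_derivs_upto_diff has_derivs_upto_mult) auto
  ultimately show ?case
    using du dv Suc.prems(3) by (auto simp: has_derivs_upto_Suc intro!: derivative_eq_intros)
qed simp

lemma has_derivs_upto_ln:
  assumes "has_derivs_upto (Suc n) u" "\<And>x. 0 < u x"
  shows "has_derivs_upto (Suc n) (\<lambda>x. ln (u x))"
proof -
  have du: "\<And>x. (u has_real_derivative deriv u x) (at x)" and ddu: "has_derivs_upto n (deriv u)"
    using assms(1) by (simp_all add: has_derivs_upto_Suc)
  have "deriv (\<lambda>x. ln (u x)) = (\<lambda>x. deriv u x / u x)"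
    using du assms(2) by (intro ext DERIV_imp_deriv) (auto intro!: derivative_eq_intros)
  moreover have "has_derivs_upto n (\<lambda>x. deriv u x / u x)"
    using ddu assms has_derivs_upto_mono[OF assms(1)]
    by (intro has_derivs_upto_divide) (auto simp: less_imp_neq[symmetric])
  ultimately show ?thesis
    using du assms(2) by (auto simp: has_derivs_upto_Suc intro!: derivative_eq_intros)
qed

lemma continuous_on_funpow_deriv:
  assumes "has_derivs_upto n u" "m < n"
  shows "continuous_on UNIV ((deriv ^^ m) u)"
  using assms unfolding has_derivs_upto_def
  by (intro continuous_at_imp_continuous_on ballI DERIV_isCont) blast

lemma C4_has_derivs_upto: "C4 f \<Longrightarrow> has_derivs_upto 4 f"
  by (simp add: C4_def has_derivs_upto_def)

lemma C4_hfun_has_derivs_upto: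
  assumes "C4 f" "\<forall>x. 0 < f x"
  shows "has_derivs_upto 4 (hfun f)"
  using has_derivs_upto_ln[of 3 f] assms C4_has_derivs_upto
  by (simp add: hfun_def[abs_def] eval_nat_numeral)

section \<open>Taylor bounds for dilations about a point\<close>

lemma Taylor_has_derivs_upto:
  assumes "has_derivs_upto n u" "0 < n"
  shows "\<exists>\<xi>. u x = (\<Sum>m<n. (deriv ^^ m) u c / fact m * (x - c) ^ m)
                + (deriv ^^ n) u \<xi> / fact n * (x - c) ^ n"
proof (cases "x = c")
  case True
  then show ?thesis
    using \<open>0 < n\<close> by (auto simp: sum.lessThan_Suc_shift gr0_conv_Suc simp del: sum.lessThan_Suc)
next
  case False
  then show ?thesis
    using Taylor[of n "\<lambda>m. (deriv ^^ m) u" u "min x c" "max x c" c x] assms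
    unfolding has_derivs_upto_def by auto
qed

lemma has_derivs_upto_growth:
  assumes u: "has_derivs_upto n u" and M: "\<forall>t. \<bar>(deriv ^^ n) u t\<bar> \<le> M"
  shows "\<bar>u t\<bar> \<le> ((\<Sum>m<n. \<bar>(deriv ^^ m) u a\<bar>) + M) * (1 + \<bar>t - a\<bar>) ^ n"
proof (cases "n = 0")
  case True
  then show ?thesis using M by simp
next
  case False
  define z where "z = \<bar>t - a\<bar>"
  have "0 \<le> z" by (simp add: z_def)
  obtain \<xi> where taylor: "u t = (\<Sum>m<n. (deriv ^^ m) u a / fact m * (t - a) ^ m)
      + (deriv ^^ n) u \<xi> / fact n * (t - a) ^ n"
    using Taylor_has_derivs_upto[OF u] False by blast
  have scaled: "\<bar>c / fact m * (t - a) ^ m\<bar> \<le> \<bar>c\<bar> * (1 + z) ^ n" if "m \<le> n" for c m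
  proof -
    have "\<bar>c / fact m * (t - a) ^ m\<bar> \<le> \<bar>c\<bar> * z ^ m"
      using frac_le[of "\<bar>c\<bar> * z ^ m" _ 1 "fact m"] \<open>0 \<le> z\<close> by (simp add: abs_mult power_abs z_def)
    also have "\<dots> \<le> \<bar>c\<bar> * (1 + z) ^ n"
      using order.trans[OF power_mono[of z "1 + z" m] power_increasing[of m n "1 + z"]] \<open>0 \<le> z\<close> that
      by (intro mult_left_mono) auto
    finally show ?thesis .
  qed
  have "\<bar>(deriv ^^ n) u \<xi>\<bar> * (1 + z) ^ n \<le> M * (1 + z) ^ n"
    using M \<open>0 \<le> z\<close> by (intro mult_right_mono) auto
  then have rest: "\<bar>(deriv ^^ n) u \<xi> / fact n * (t - a) ^ n\<bar> \<le> M * (1 + z) ^ n"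
    using scaled[where m = n and c = "(deriv ^^ n) u \<xi>"] by linarith
  have "\<bar>u t\<bar> \<le> (\<Sum>m<n. \<bar>(deriv ^^ m) u a\<bar> * (1 + z) ^ n) + M * (1 + z) ^ n"
    unfolding taylor
    by (rule order.trans[OF abs_triangle_ineq add_mono[OF order.trans[OF sum_abs sum_mono] rest]])
      (use scaled in auto)
  then show ?thesis by (simp add: z_def sum_distrib_right distrib_right)
qed

lemma funpow_deriv_growth:
  assumes u: "has_derivs_upto n u" and M: "\<forall>t. \<bar>(deriv ^^ n) u t\<bar> \<le> M" and "j \<le> n"
  shows "\<bar>(t - a) ^ j * (deriv ^^ j) u t\<bar>
           \<le> ((\<Sum>m<n. \<bar>(deriv ^^ m) u a\<bar>) + M) * (1 + \<bar>t - a\<bar>) ^ n"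
proof -
  define z where "z = \<bar>t - a\<bar>"
  define A where "A = (\<Sum>m<n. \<bar>(deriv ^^ m) u a\<bar>) + M"
  have shift: "(deriv ^^ m) ((deriv ^^ j) u) = (deriv ^^ (m + j)) u" for m
    by (simp add: funpow_add)
  have "(\<Sum>m<n-j. \<bar>(deriv ^^ (m + j)) u a\<bar>) = (\<Sum>m\<in>(\<lambda>m. m + j) ` {..<n-j}. \<bar>(deriv ^^ m) u a\<bar>)"
    by (simp add: sum.reindex)
  also have "\<dots> \<le> (\<Sum>m<n. \<bar>(deriv ^^ m) u a\<bar>)"
    by (intro sum_mono2) auto
  finally have reindex: "(\<Sum>m<n-j. \<bar>(deriv ^^ (m + j)) u a\<bar>) \<le> (\<Sum>m<n. \<bar>(deriv ^^ m) u a\<bar>)" .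
  have "\<bar>(deriv ^^ j) u t\<bar> \<le> ((\<Sum>m<n-j. \<bar>(deriv ^^ (m + j)) u a\<bar>) + M) * (1 + z) ^ (n - j)"
    using has_derivs_upto_growth[OF has_derivs_upto_funpow[OF u \<open>j \<le> n\<close>]] M \<open>j \<le> n\<close>
    by (simp add: shift z_def)
  also have "\<dots> \<le> A * (1 + z) ^ (n - j)"
    using reindex unfolding A_def z_def by (intro mult_right_mono) auto
  finally have D_bound: "\<bar>(deriv ^^ j) u t\<bar> \<le> A * (1 + z) ^ (n - j)" .
  have "\<bar>(t - a) ^ j * (deriv ^^ j) u t\<bar> = z ^ j * \<bar>(deriv ^^ j) u t\<bar>"
    by (simp add: abs_mult power_abs z_def)
  also have "\<dots> \<le> (1 + z) ^ j * (A * (1 + z) ^ (n - j))"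
    using D_bound by (intro mult_mono power_mono) (auto simp: z_def)
  also have "\<dots> = A * (1 + z) ^ n"
    using \<open>j \<le> n\<close> by (simp add: mult.left_commute flip: power_add)
  finally show ?thesis by (simp add: A_def z_def)
qed

(* For u = hfun f, the factors of c and e are kfun f a t and rfun f a t. *)
definition dilation_remainder ::
    "(real \<Rightarrow> real) \<Rightarrow> real \<Rightarrow> real \<Rightarrow> real \<Rightarrow> real \<Rightarrow> real \<Rightarrow> real \<Rightarrow> real" where
  "dilation_remainder u a q s c e t =
     q * (u (s * (t - a) + a) - u t) - c * ((t - a) * deriv u t) - e * ((t - a)^2 * deriv (deriv u) t)"

definition dilation_defect :: "real \<Rightarrow> real \<Rightarrow> real \<Rightarrow> real \<Rightarrow> real" where
  "dilation_defect q s c e =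
     \<bar>q * (s - 1) - c\<bar> + \<bar>q * (s - 1)^2 / 2 - e\<bar> + \<bar>q * (s - 1)^3 / 6\<bar> + \<bar>q * (s - 1)^4 / 24\<bar>"

lemma abs_lincomb4_le:
  fixes a1 a2 a3 a4 X1 X2 X3 X4 W :: real
  assumes "\<bar>X1\<bar> \<le> W" "\<bar>X2\<bar> \<le> W" "\<bar>X3\<bar> \<le> W" "\<bar>X4\<bar> \<le> W"
  shows "\<bar>a1 * X1 + a2 * X2 + a3 * X3 + a4 * X4\<bar> \<le> (\<bar>a1\<bar> + \<bar>a2\<bar> + \<bar>a3\<bar> + \<bar>a4\<bar>) * W"
proof -
  have "\<bar>a * X\<bar> \<le> \<bar>a\<bar> * W" if "\<bar>X\<bar> \<le> W" for a X :: real
    using that by (simp add: abs_mult mult_left_mono)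
  then have "\<bar>a1 * X1\<bar> + \<bar>a2 * X2\<bar> + \<bar>a3 * X3\<bar> + \<bar>a4 * X4\<bar> \<le> (\<bar>a1\<bar> + \<bar>a2\<bar> + \<bar>a3\<bar> + \<bar>a4\<bar>) * W"
    using assms by (simp add: distrib_right add_mono)
  then show ?thesis by linarith
qed

lemma dilation_remainder_bound:
  assumes u: "has_derivs_upto 4 u" and M: "\<forall>t. \<bar>(deriv ^^ 4) u t\<bar> \<le> M"
  shows "\<bar>dilation_remainder u a q s c e t\<bar>
           \<le> dilation_defect q s c e * (((\<Sum>m<4. \<bar>(deriv ^^ m) u a\<bar>) + M) * (1 + \<bar>t - a\<bar>) ^ 4)"
    (is "_ \<le> _ * ?W")
proof -
  define z where "z = t - a"
  define D where "D j = (deriv ^^ j) u t" for j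
  have growth: "\<bar>z ^ j * D j\<bar> \<le> ?W" if "j \<le> 4" for j
    using funpow_deriv_growth[OF u M that] by (simp add: z_def D_def)
  obtain \<xi> where "u (s * z + a) = (\<Sum>m<4. D m / fact m * (s * z + a - t) ^ m)
      + (deriv ^^ 4) u \<xi> / fact 4 * (s * z + a - t) ^ 4"
    using Taylor_has_derivs_upto[OF u] unfolding D_def by (meson zero_less_numeral)
  moreover have "s * z + a - t = (s - 1) * z" by (simp add: z_def algebra_simps)
  moreover have "(\<Sum>m<4. g m) = g 0 + g 1 + g 2 + (g 3 :: real)" for g :: "nat \<Rightarrow> real"
    by (simp add: eval_nat_numeral)
  ultimately have taylor: "u (s * z + a) = D 0 + D 1 * ((s - 1) * z) + D 2 / 2 * ((s - 1) * z)^2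
      + D 3 / 6 * ((s - 1) * z)^3 + (deriv ^^ 4) u \<xi> / 24 * ((s - 1) * z) ^ 4"
    by (simp add: fact_numeral)
  have "\<bar>z ^ 4 * (deriv ^^ 4) u \<xi>\<bar> \<le> M * \<bar>z\<bar> ^ 4"
    using M by (simp add: abs_mult power_abs mult.commute[of "z ^ 4"] mult_right_mono)
  also have "\<dots> \<le> ?W"
  proof (rule mult_mono)
    have "0 \<le> M" using M by (meson abs_ge_zero order.trans)
    then show "0 \<le> (\<Sum>m<4. \<bar>(deriv ^^ m) u a\<bar>) + M" by (simp add: sum_nonneg)
    show "\<bar>z\<bar> ^ 4 \<le> (1 + \<bar>t - a\<bar>) ^ 4" unfolding z_def by (rule power_mono) auto
  qed (simp_all add: sum_nonneg)
  finally have rest: "\<bar>z ^ 4 * (deriv ^^ 4) u \<xi>\<bar> \<le> ?W" .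
  have "deriv u t = D 1" "deriv (deriv u) t = D 2" "u t = D 0"
    by (simp_all add: D_def numeral_2_eq_2)
  then have "dilation_remainder u a q s c e t
      = (q * (s - 1) - c) * (z * D 1) + (q * (s - 1)^2 / 2 - e) * (z^2 * D 2)
        + (q * (s - 1)^3 / 6) * (z^3 * D 3) + (q * (s - 1)^4 / 24) * (z^4 * (deriv ^^ 4) u \<xi>)"
    unfolding dilation_remainder_def z_def[symmetric] taylor power_mult_distrib
    by (simp add: algebra_simps)
  also have "\<bar>\<dots>\<bar> \<le> dilation_defect q s c e * ?W"
    unfolding dilation_defect_def using growth[of 1] growth[of 2] growth[of 3] rest
    by (intro abs_lincomb4_le) simp_all
  finally show ?thesis .
qed

section \<open>Asymptotics of the Taylor defect\<close>

lemma dilation_defect_scale: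
  assumes "0 \<le> b"
  shows "dilation_defect (b * q) s (b * c) (b * e) = b * dilation_defect q s c e"
proof -
  have "dilation_defect (b * q) s (b * c) (b * e) = \<bar>b * (q * (s - 1) - c)\<bar>
      + \<bar>b * (q * (s - 1)^2 / 2 - e)\<bar> + \<bar>b * (q * (s - 1)^3 / 6)\<bar> + \<bar>b * (q * (s - 1)^4 / 24)\<bar>"
    by (simp add: dilation_defect_def algebra_simps)
  then show ?thesis
    using assms by (simp add: dilation_defect_def abs_mult distrib_left)
qed

(* real_asymp cannot cancel the leading terms of (s - 1)^2 unless the square is written as a product. *)
lemma contraction_defect_small:
  "((\<lambda>u. dilation_defect (1 + u) (1 / sqrt (1 + u)) (- u / 2 - u^2 / 8) (u^2 / 8) / u^2)
     \<longlongrightarrow> 0) (at_right 0)"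
  unfolding dilation_defect_def power2_eq_square[of "_ - 1"] by real_asymp

lemma expansion_defect_small:
  "((\<lambda>u. dilation_defect 1 (sqrt (1 + u)) (u / 2 - u^2 / 8) (u^2 / 8) / u^2) \<longlongrightarrow> 0) (at_right 0)"
  unfolding dilation_defect_def power2_eq_square[of "_ - 1"] by real_asymp

lemma tendsto_real_mult_at_inverse_sqrt:
  fixes F :: "real \<Rightarrow> real"
  assumes F: "((\<lambda>u. F u / u^2) \<longlongrightarrow> 0) (at_right 0)" and "0 < c"
  shows "((\<lambda>d. real d * F (c / sqrt (real d))) \<longlongrightarrow> 0) sequentially"
proof -
  have "filterlim (\<lambda>d. c / sqrt (real d)) (at_right 0) sequentially"
    using \<open>0 < c\<close> by real_asymp
  with F have "((\<lambda>d. c^2 * (F (c / sqrt (real d)) / (c / sqrt (real d))^2)) \<longlongrightarrow> c^2 * 0) sequentially"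
    by (intro tendsto_mult tendsto_const filterlim_compose[OF F])
  then have lim: "((\<lambda>d. c^2 * (F (c / sqrt (real d)) / (c / sqrt (real d))^2)) \<longlongrightarrow> 0) sequentially"
    by simp
  show ?thesis
  proof (rule Lim_transform_eventually[OF lim])
    show "\<forall>\<^sub>F d in sequentially.
        c^2 * (F (c / sqrt (real d)) / (c / sqrt (real d))^2) = real d * F (c / sqrt (real d))"
      by (rule eventually_sequentiallyI[of 1]) (use \<open>0 < c\<close> in \<open>simp add: power_divide\<close>)
  qed
qed

lemma contraction_defect_tendsto:
  assumes "0 < \<beta>" "0 < l"
  defines "\<epsilon> d \<equiv> l / sqrt (real d)"
  shows "((\<lambda>d. real d * dilation_defect (\<beta> + \<epsilon> d) (sqrt (\<beta> / (\<beta> + \<epsilon> d)))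
                  (- \<epsilon> d / 2 - (\<epsilon> d)^2 / (8 * \<beta>)) ((\<epsilon> d)^2 / (8 * \<beta>))) \<longlongrightarrow> 0) sequentially"
proof -
  define G where "G u = dilation_defect (1 + u) (1 / sqrt (1 + u)) (- u / 2 - u^2 / 8) (u^2 / 8)" for u
  have scale: "dilation_defect (\<beta> + \<epsilon>) (sqrt (\<beta> / (\<beta> + \<epsilon>))) (- \<epsilon> / 2 - \<epsilon>^2 / (8 * \<beta>))
      (\<epsilon>^2 / (8 * \<beta>)) = \<beta> * G (\<epsilon> / \<beta>)" if "0 \<le> \<epsilon>" for \<epsilon>
  proof -
    have "1 + \<epsilon> / \<beta> = (\<beta> + \<epsilon>) / \<beta>" using assms by (simp add: field_simps)
    then have "1 / sqrt (1 + \<epsilon> / \<beta>) = sqrt (\<beta> / (\<beta> + \<epsilon>))" by (simp add: real_sqrt_divide)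
    moreover have "\<beta> * (1 + \<epsilon> / \<beta>) = \<beta> + \<epsilon>"
      "\<beta> * (- (\<epsilon> / \<beta>) / 2 - (\<epsilon> / \<beta>)^2 / 8) = - \<epsilon> / 2 - \<epsilon>^2 / (8 * \<beta>)"
      "\<beta> * ((\<epsilon> / \<beta>)^2 / 8) = \<epsilon>^2 / (8 * \<beta>)"
      using assms by (simp_all add: field_simps power2_eq_square)
    ultimately show ?thesis
      using assms unfolding G_def by (simp add: mult.commute[of 8] flip: dilation_defect_scale)
  qed
  have "((\<lambda>d. \<beta> * (real d * G (l / \<beta> / sqrt (real d)))) \<longlongrightarrow> \<beta> * 0) sequentially"
    using contraction_defect_small assms
    by (intro tendsto_mult tendsto_const tendsto_real_mult_at_inverse_sqrt) (simp_all add: G_def)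
  then have lim: "((\<lambda>d. \<beta> * (real d * G (\<epsilon> d / \<beta>))) \<longlongrightarrow> 0) sequentially"
    by (simp add: \<epsilon>_def mult.commute)
  have "0 \<le> \<epsilon> d" for d using assms by (simp add: \<epsilon>_def)
  then have eq: "real d * dilation_defect (\<beta> + \<epsilon> d) (sqrt (\<beta> / (\<beta> + \<epsilon> d)))
      (- \<epsilon> d / 2 - (\<epsilon> d)^2 / (8 * \<beta>)) ((\<epsilon> d)^2 / (8 * \<beta>)) = \<beta> * (real d * G (\<epsilon> d / \<beta>))" for d
    by (simp only: scale mult.left_commute)
  show ?thesis unfolding eq by (rule lim)
qed

lemma expansion_defect_tendsto:
  assumes "0 < \<beta>" "0 < l"
  defines "\<epsilon> d \<equiv> l / sqrt (real d)"
  shows "((\<lambda>d. real d * dilation_defect \<beta> (sqrt ((\<beta> + \<epsilon> d) / \<beta>))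
                  (\<epsilon> d / 2 - (\<epsilon> d)^2 / (8 * \<beta>)) ((\<epsilon> d)^2 / (8 * \<beta>))) \<longlongrightarrow> 0) sequentially"
proof -
  define G where "G u = dilation_defect 1 (sqrt (1 + u)) (u / 2 - u^2 / 8) (u^2 / 8)" for u
  have scale: "dilation_defect \<beta> (sqrt ((\<beta> + \<epsilon>) / \<beta>)) (\<epsilon> / 2 - \<epsilon>^2 / (8 * \<beta>))
      (\<epsilon>^2 / (8 * \<beta>)) = \<beta> * G (\<epsilon> / \<beta>)" for \<epsilon>
  proof -
    have "1 + \<epsilon> / \<beta> = (\<beta> + \<epsilon>) / \<beta>" using assms by (simp add: field_simps)
    moreover have "\<beta> * 1 = \<beta>"
      "\<beta> * (\<epsilon> / \<beta> / 2 - (\<epsilon> / \<beta>)^2 / 8) = \<epsilon> / 2 - \<epsilon>^2 / (8 * \<beta>)"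
      "\<beta> * ((\<epsilon> / \<beta>)^2 / 8) = \<epsilon>^2 / (8 * \<beta>)"
      using assms by (simp_all add: field_simps power2_eq_square)
    ultimately show ?thesis
      using assms unfolding G_def by (simp add: mult.commute[of 8] flip: dilation_defect_scale)
  qed
  have "((\<lambda>d. \<beta> * (real d * G (l / \<beta> / sqrt (real d)))) \<longlongrightarrow> \<beta> * 0) sequentially"
    using expansion_defect_small assms
    by (intro tendsto_mult tendsto_const tendsto_real_mult_at_inverse_sqrt) (simp_all add: G_def)
  moreover have "l / \<beta> / sqrt (real d) = \<epsilon> d / \<beta>" for d by (simp add: \<epsilon>_def)
  ultimately show ?thesis
    by (simp add: scale mult.left_commute)
qed

section \<open>Tails of regularly varying potentials\<close>

lemma bounded_by_doubling:
  fixes \<phi> :: "real \<Rightarrow> real"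
  assumes "0 < T" and doubling: "\<And>s. T \<le> s \<Longrightarrow> \<phi> (2 * s) \<le> \<phi> s"
    and base: "\<And>t. T \<le> t \<Longrightarrow> t \<le> 2 * T \<Longrightarrow> \<phi> t \<le> C" and "T \<le> t"
  shows "\<phi> t \<le> C"
proof -
  have "\<forall>t. T \<le> t \<and> t \<le> 2 ^ n * T \<longrightarrow> \<phi> t \<le> C" for n
  proof (induction n)
    case 0
    then show ?case using base \<open>0 < T\<close> by auto
  next
    case (Suc n)
    show ?case
    proof (intro allI impI)
      fix t assume t: "T \<le> t \<and> t \<le> 2 ^ Suc n * T"
      show "\<phi> t \<le> C"
      proof (cases "t \<le> 2 * T")
        case True
        then show ?thesis using base t by auto
      next
        case False
        then have "T \<le> t / 2" "t / 2 \<le> 2 ^ n * T" using t by auto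
        then have "\<phi> (2 * (t / 2)) \<le> \<phi> (t / 2)" "\<phi> (t / 2) \<le> C"
          using doubling Suc.IH by blast+
        then show ?thesis by simp
      qed
    qed
  qed
  moreover obtain n where "t / T < 2 ^ n"
    using real_arch_pow[of 2 "t / T"] by auto
  then have "t \<le> 2 ^ n * T" using \<open>0 < T\<close> by (simp add: divide_less_eq)
  ultimately show ?thesis using \<open>T \<le> t\<close> by blast
qed

lemma eventually_ge_of_doubling:
  fixes G :: "real \<Rightarrow> real"
  assumes mono: "\<And>a c. T \<le> a \<Longrightarrow> a \<le> c \<Longrightarrow> G a \<le> G c"
    and grow: "\<And>t. T \<le> t \<Longrightarrow> 0 < G t \<and> q * G t < G (2 * t)" and "1 < q" "0 < T"
  shows "\<exists>S\<ge>T. \<forall>s\<ge>S. L \<le> G s"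
proof -
  have iter: "q ^ j * G T \<le> G (2 ^ j * T)" for j
  proof (induction j)
    case (Suc j)
    have "T \<le> 2 ^ j * T" using \<open>0 < T\<close> by simp
    then have "q * G (2 ^ j * T) < G (2 * (2 ^ j * T))" using grow by blast
    moreover have "q * (q ^ j * G T) \<le> q * G (2 ^ j * T)" using Suc \<open>1 < q\<close> by simp
    ultimately show ?case by (simp add: mult.assoc)
  qed simp
  have "0 < G T" using grow by blast
  obtain j where "L / G T < q ^ j" using real_arch_pow[OF \<open>1 < q\<close>] by blast
  then have "L \<le> G (2 ^ j * T)"
    using iter[of j] \<open>0 < G T\<close> by (simp add: divide_less_eq)
  moreover have "T \<le> 2 ^ j * T" using \<open>0 < T\<close> by simp
  ultimately show ?thesis
    using mono by (meson order.trans)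
qed

lemma doubling_of_ratio_limit:
  fixes G :: "real \<Rightarrow> real"
  assumes mono: "\<And>a c. m \<le> a \<Longrightarrow> a \<le> c \<Longrightarrow> G a \<le> G c"
    and lim: "((\<lambda>t. G (t * 2) / G t) \<longlongrightarrow> 2 powr \<alpha>) at_top" and "0 < \<alpha>"
  obtains q T where "1 < q" "0 < T" "m \<le> T" "\<And>t. T \<le> t \<Longrightarrow> 0 < G t \<and> q * G t < G (2 * t)"
proof -
  define q where "q = (1 + 2 powr \<alpha>) / 2"
  have "1 < 2 powr \<alpha>" using \<open>0 < \<alpha>\<close> by simp
  then have "1 < q" "q < 2 powr \<alpha>" by (auto simp: q_def)
  then obtain T0 where T0: "\<And>t. T0 \<le> t \<Longrightarrow> q < G (t * 2) / G t"
    using order_tendstoD(1)[OF lim] by (auto simp: eventually_at_top_linorder)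
  define T where "T = max T0 (max m 1)"
  have "0 < G t \<and> q * G t < G (2 * t)" if "T \<le> t" for t
  proof -
    have ratio: "q < G (t * 2) / G t" using T0 that by (simp add: T_def)
    have "G t \<le> G (t * 2)" using mono that by (simp add: T_def)
    have "0 < G t"
    proof (rule ccontr)
      assume "\<not> 0 < G t"
      then have "G t < 0" using ratio \<open>1 < q\<close> by (cases "G t = 0") auto
      then have "G (t * 2) < q * G t" using ratio by (simp add: less_divide_eq mult.commute)
      also have "\<dots> < G t" using \<open>G t < 0\<close> \<open>1 < q\<close> by simp
      finally show False using \<open>G t \<le> G (t * 2)\<close> by simp
    qed
    then show ?thesis using ratio by (simp add: less_divide_eq mult.commute)
  qed
  moreover have "0 < T" "m \<le> T" by (auto simp: T_def)
  ultimately show thesis using that \<open>1 < q\<close> by blast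
qed

lemma power_exp_bounded_of_doubling:
  fixes G :: "real \<Rightarrow> real"
  assumes mono: "\<And>a c. m \<le> a \<Longrightarrow> a \<le> c \<Longrightarrow> G a \<le> G c"
    and lim: "((\<lambda>t. G (t * 2) / G t) \<longlongrightarrow> 2 powr \<alpha>) at_top" and "0 < \<alpha>" "0 < b"
  shows "\<exists>T C. 0 < T \<and> (\<forall>t\<ge>T. t ^ k * exp (- b * G t) \<le> C)"
proof -
  obtain q T1 where "1 < q" "0 < T1" "m \<le> T1" and grow: "\<And>t. T1 \<le> t \<Longrightarrow> 0 < G t \<and> q * G t < G (2 * t)"
    using doubling_of_ratio_limit[OF mono lim \<open>0 < \<alpha>\<close>] by blast
  obtain T where "T1 \<le> T" and large: "\<And>s. T \<le> s \<Longrightarrow> k * ln 2 / (b * (q - 1)) \<le> G s"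
    using eventually_ge_of_doubling[of T1 G q "k * ln 2 / (b * (q - 1))"] mono grow \<open>1 < q\<close> \<open>0 < T1\<close>
      \<open>m \<le> T1\<close> by force
  have "0 < T" using \<open>T1 \<le> T\<close> \<open>0 < T1\<close> by simp
  define \<phi> where "\<phi> t = t ^ k * exp (- b * G t)" for t
  \<comment> \<open>Beyond T, doubling t multiplies t^k by 2^k but exp (- b * G t) by at most 2^-k.\<close>
  have "\<phi> t \<le> (2 * T) ^ k" if "T \<le> t" for t
  proof (rule bounded_by_doubling[OF \<open>0 < T\<close> _ _ that])
    fix s assume "T \<le> s"
    have "k * ln 2 \<le> b * (q - 1) * G s"
      using large[OF \<open>T \<le> s\<close>] \<open>1 < q\<close> \<open>0 < b\<close> by (simp add: field_simps)
    then have "2 ^ k * exp (- (b * (q - 1) * G s)) \<le> 2 ^ k * exp (- (k * ln 2))"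
      by simp
    also have "\<dots> = 1" by (simp add: exp_minus exp_of_nat_mult)
    finally have le1: "2 ^ k * exp (- (b * (q - 1) * G s)) \<le> 1" .
    have "exp (- b * G (2 * s)) \<le> exp (- b * (q * G s))"
      using grow[of s] \<open>T1 \<le> T\<close> \<open>T \<le> s\<close> \<open>0 < b\<close> by simp
    then have "\<phi> (2 * s) \<le> s ^ k * (2 ^ k * exp (- (b * (q - 1) * G s))) * exp (- b * G s)"
      using \<open>0 < T\<close> \<open>T \<le> s\<close>
      by (simp add: \<phi>_def algebra_simps flip: exp_add)
    also have "\<dots> \<le> \<phi> s"
      using le1 \<open>0 < T\<close> \<open>T \<le> s\<close> by (simp add: \<phi>_def mult_left_le)
    finally show "\<phi> (2 * s) \<le> \<phi> s" .
  next
    fix t assume "T \<le> t" "t \<le> 2 * T"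
    have "0 \<le> k * ln 2 / (b * (q - 1))"
      using \<open>1 < q\<close> \<open>0 < b\<close> by (intro divide_nonneg_pos) auto
    then have "0 \<le> G t" using large[OF \<open>T \<le> t\<close>] by linarith
    then have "t ^ k * exp (- b * G t) \<le> t ^ k"
      using \<open>0 < T\<close> \<open>T \<le> t\<close> \<open>0 < b\<close> by (intro mult_left_le) auto
    also have "\<dots> \<le> (2 * T) ^ k"
      using \<open>0 < T\<close> \<open>T \<le> t\<close> \<open>t \<le> 2 * T\<close> by (intro power_mono) auto
    finally show "\<phi> t \<le> (2 * T) ^ k" by (simp add: \<phi>_def)
  qed
  then show ?thesis using \<open>0 < T\<close> unfolding \<phi>_def by blast
qed

lemma unimodal_at_le_mode: "unimodal_at f mu \<Longrightarrow> f t \<le> f mu"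
  unfolding unimodal_at_def by (cases "t \<le> mu") auto

lemma powr_decay_of_regularly_varying:
  assumes pos: "\<forall>x. 0 < f x" and unimodal: "unimodal_at f mu"
    and regvar: "regularly_varying (\<lambda>t. - ln (f t))" and "0 < b"
  shows "\<exists>T C. 0 < T \<and> (\<forall>t. T \<le> \<bar>t\<bar> \<longrightarrow> \<bar>t\<bar> ^ k * f t powr b \<le> C)"
proof -
  define H where "H t = - ln (f t)" for t
  have f_H: "f t powr b = exp (- b * H t)" for t
    using pos[rule_format, of t] by (simp add: powr_def H_def)
  obtain \<alpha> where "0 < \<alpha>" and lim: "((\<lambda>t. H (t * 2) / H t) \<longlongrightarrow> 2 powr \<alpha>) at_infinity"
    using regvar unfolding regularly_varying_def H_def by fastforce
  have "((\<lambda>t. H (t * 2) / H t) \<longlongrightarrow> 2 powr \<alpha>) at_top"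
    using lim at_top_le_at_infinity by (rule tendsto_mono[rotated])
  moreover have "H a \<le> H c" if "mu \<le> a" "a \<le> c" for a c
    using unimodal pos that unfolding unimodal_at_def H_def by auto
  ultimately obtain TR CR where "0 < TR" and right: "\<And>t. TR \<le> t \<Longrightarrow> t ^ k * exp (- b * H t) \<le> CR"
    using power_exp_bounded_of_doubling[of mu H \<alpha> b k] \<open>0 < \<alpha>\<close> \<open>0 < b\<close> by blast
  have "filterlim uminus at_infinity (at_top :: real filter)"
    using filterlim_uminus_at_bot_at_top at_bot_le_at_infinity by (rule filterlim_mono) auto
  from filterlim_compose[OF lim this]
  have "((\<lambda>t. H (- t * 2) / H (- t)) \<longlongrightarrow> 2 powr \<alpha>) at_top" by simp
  moreover have "H (- a) \<le> H (- c)" if "- mu \<le> a" "a \<le> c" for a c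
    using unimodal pos that unfolding unimodal_at_def H_def by auto
  ultimately obtain TL CL where "0 < TL" and left: "\<And>t. TL \<le> t \<Longrightarrow> t ^ k * exp (- b * H (- t)) \<le> CL"
    using power_exp_bounded_of_doubling[of "- mu" "\<lambda>t. H (- t)" \<alpha> b k] \<open>0 < \<alpha>\<close> \<open>0 < b\<close> by auto
  have "\<bar>t\<bar> ^ k * f t powr b \<le> max CR CL" if "max TR TL \<le> \<bar>t\<bar>" for t
  proof (cases "0 \<le> t")
    case True
    then show ?thesis using right[of t] that by (simp add: f_H)
  next
    case False
    then show ?thesis using left[of "- t"] that by (simp add: f_H)
  qed
  moreover have "0 < max TR TL" using \<open>0 < TR\<close> by simp
  ultimately show ?thesis by blast
qed

lemma integrable_of_bounded_times_1_plus_square: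
  fixes g :: "real \<Rightarrow> real"
  assumes "g \<in> borel_measurable lborel" and bound: "\<And>t. \<bar>g t\<bar> * (1 + t^2) \<le> K"
  shows "integrable lborel g"
proof (rule Bochner_Integration.integrable_bound)
  show "integrable lborel (\<lambda>t::real. K * inverse (1 + t^2))"
    using integrable_inverse_1_plus_square by (simp add: set_integrable_def)
  show "AE t in lborel. norm (g t) \<le> norm (K * inverse (1 + t^2))"
  proof (rule AE_I2)
    fix t :: real
    have "0 < 1 + t^2" by (simp add: add_pos_nonneg)
    then show "norm (g t) \<le> norm (K * inverse (1 + t^2))"
      using bound[of t] order.trans[OF _ bound[of t]] by (simp add: field_simps)
  qed
qed fact

lemma poly_weight_le_power:
  fixes a t :: real
  assumes "1 \<le> \<bar>t\<bar>"
  shows "(1 + \<bar>t - a\<bar>) ^ n * (1 + t^2) \<le> 2 * (2 + \<bar>a\<bar>) ^ n * \<bar>t\<bar> ^ (n + 2)"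
proof -
  have "\<bar>a\<bar> \<le> \<bar>a\<bar> * \<bar>t\<bar>" using assms by (simp add: mult_le_cancel_left1)
  then have "1 + \<bar>t - a\<bar> \<le> (2 + \<bar>a\<bar>) * \<bar>t\<bar>"
    unfolding distrib_right using abs_triangle_ineq4[of t a] assms by linarith
  then have "(1 + \<bar>t - a\<bar>) ^ n \<le> (2 + \<bar>a\<bar>) ^ n * \<bar>t\<bar> ^ n"
    unfolding power_mult_distrib[symmetric] by (intro power_mono) auto
  moreover have "1 \<le> \<bar>t\<bar>^2" using assms by (rule one_le_power)
  then have "1 + t^2 \<le> 2 * \<bar>t\<bar>^2" by simp
  ultimately have "(1 + \<bar>t - a\<bar>) ^ n * (1 + t^2) \<le> ((2 + \<bar>a\<bar>) ^ n * \<bar>t\<bar> ^ n) * (2 * \<bar>t\<bar>^2)"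
    by (intro mult_mono) auto
  then show ?thesis by (simp add: power_add power2_eq_square mult_ac)
qed

lemma integrable_poly_weight_powr:
  assumes pos: "\<forall>x. 0 < f x" and unimodal: "unimodal_at f mu"
    and regvar: "regularly_varying (\<lambda>t. - ln (f t))"
    and f_meas: "f \<in> borel_measurable borel" and "0 < b"
  shows "integrable lborel (\<lambda>t. (1 + \<bar>t - a\<bar>) ^ n * f t powr b)"
proof -
  obtain T C where "0 < T" and decay: "\<And>t. T \<le> \<bar>t\<bar> \<Longrightarrow> \<bar>t\<bar> ^ (n + 2) * f t powr b \<le> C"
    using powr_decay_of_regularly_varying[OF pos unimodal regvar \<open>0 < b\<close>] by blast
  define T' where "T' = max T 1"
  have "0 \<le> \<bar>T\<bar> ^ (n + 2) * f T powr b" by simp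
  also have "\<dots> \<le> C" using decay[of T] \<open>0 < T\<close> by simp
  finally have "0 \<le> C" .
  have bound: "\<bar>(1 + \<bar>t - a\<bar>) ^ n * f t powr b\<bar> * (1 + t^2)
      \<le> 2 * (2 + \<bar>a\<bar>) ^ n * C + (1 + T' + \<bar>a\<bar>) ^ n * f mu powr b * (1 + T'^2)" for t
  proof (cases "T' \<le> \<bar>t\<bar>")
    case True
    then have "(1 + \<bar>t - a\<bar>) ^ n * (1 + t^2) * f t powr b \<le> 2 * (2 + \<bar>a\<bar>) ^ n * \<bar>t\<bar> ^ (n + 2) * f t powr b"
      by (intro mult_right_mono poly_weight_le_power) (auto simp: T'_def)
    also have "\<dots> \<le> 2 * (2 + \<bar>a\<bar>) ^ n * C"
      using decay[of t] True by (simp add: T'_def mult.assoc)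
    finally have "(1 + \<bar>t - a\<bar>) ^ n * (1 + t^2) * f t powr b \<le> 2 * (2 + \<bar>a\<bar>) ^ n * C" .
    moreover have "0 \<le> (1 + T' + \<bar>a\<bar>) ^ n * f mu powr b * (1 + T'^2)"
      using \<open>0 < T\<close> by (simp add: T'_def)
    ultimately show ?thesis by (simp add: mult_ac)
  next
    case False
    have "(1 + \<bar>t - a\<bar>) ^ n \<le> (1 + T' + \<bar>a\<bar>) ^ n"
      using False by (intro power_mono) auto
    moreover have "f t powr b \<le> f mu powr b"
      using unimodal_at_le_mode[OF unimodal] pos \<open>0 < b\<close> by (intro powr_mono2) (auto simp: less_imp_le)
    moreover have "1 + t^2 \<le> 1 + T'^2"
      using False by (simp add: abs_le_square_iff[symmetric])
    ultimately have "(1 + \<bar>t - a\<bar>) ^ n * f t powr b * (1 + t^2) \<le> (1 + T' + \<bar>a\<bar>) ^ n * f mu powr b * (1 + T'^2)"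
      using \<open>0 < T\<close> by (intro mult_mono) (auto simp: T'_def)
    moreover have "0 \<le> 2 * (2 + \<bar>a\<bar>) ^ n * C" using \<open>0 \<le> C\<close> by simp
    ultimately show ?thesis by (simp add: abs_mult mult_ac)
  qed
  show ?thesis
    by (rule integrable_of_bounded_times_1_plus_square[OF _ bound]) (use f_meas in measurable)
qed

section \<open>Coordinate sums under tempered product densities\<close>

lemma fd_powr: "\<forall>x. 0 < f x \<Longrightarrow> fd f d x powr b = (\<Prod>i<d. f (x i) powr b)"
  unfolding fd_def by (rule prod_powr_distrib)

lemma product_sigma_finite_lborel: "product_sigma_finite (\<lambda>_. lborel :: real measure)"
  by (simp add: product_sigma_finite_def lborel.sigma_finite_measure_axioms)

lemma integral_fd_powr:
  assumes pos: "\<forall>x. 0 < f x" and int: "integrable lborel (\<lambda>t. f t powr b)"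
  shows "(\<integral>z. fd f d z powr b \<partial>leb d) = (\<integral>t. f t powr b \<partial>lborel) ^ d"
proof -
  interpret product_sigma_finite "\<lambda>_::nat. lborel :: real measure"
    by (rule product_sigma_finite_lborel)
  have "(\<integral>z. fd f d z powr b \<partial>leb d) = (\<integral>z. (\<Prod>i<d. f (z i) powr b) \<partial>leb d)"
    using fd_powr[OF pos] by simp
  also have "\<dots> = (\<Prod>i<d. \<integral>t. f t powr b \<partial>lborel)"
    unfolding leb_def by (rule product_integral_prod) (auto intro: int)
  finally show ?thesis by simp
qed

lemma
  assumes pos: "\<forall>x. 0 < f x" and int: "integrable lborel (\<lambda>t. f t powr b)"
    and int_g: "integrable lborel (\<lambda>t. g t * f t powr b)" and "i < d"
  shows integrable_coordinate_fd_powr: "integrable (leb d) (\<lambda>x. g (x i) * fd f d x powr b)"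
    and integral_coordinate_fd_powr: "(\<integral>x. g (x i) * fd f d x powr b \<partial>leb d)
           = (\<integral>t. g t * f t powr b \<partial>lborel) * (\<integral>t. f t powr b \<partial>lborel) ^ (d - 1)"
proof -
  interpret product_sigma_finite "\<lambda>_::nat. lborel :: real measure"
    by (rule product_sigma_finite_lborel)
  define F where "F j = (if j = i then (\<lambda>t. g t * f t powr b) else (\<lambda>t. f t powr b))" for j
  have F_int: "integrable lborel (F j)" for j
    using int int_g by (simp add: F_def)
  have "(\<Prod>j<d. F j (x j)) = F i (x i) * (\<Prod>j\<in>{..<d} - {i}. F j (x j))" for x
    using \<open>i < d\<close> by (simp add: prod.remove)
  also have "\<dots> x = g (x i) * fd f d x powr b" for x
    using \<open>i < d\<close> by (simp add: F_def fd_powr[OF pos] prod.remove mult.assoc)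
  finally have F_prod: "(\<lambda>x. \<Prod>j<d. F j (x j)) = (\<lambda>x. g (x i) * fd f d x powr b)" by (rule ext)
  show "integrable (leb d) (\<lambda>x. g (x i) * fd f d x powr b)"
    unfolding leb_def F_prod[symmetric] by (rule product_integrable_prod) (auto intro: F_int)
  have "(\<integral>x. g (x i) * fd f d x powr b \<partial>leb d) = (\<Prod>j<d. integral\<^sup>L lborel (F j))"
    unfolding leb_def F_prod[symmetric] by (rule product_integral_prod) (auto intro: F_int)
  also have "\<dots> = integral\<^sup>L lborel (F i) * (\<Prod>j\<in>{..<d} - {i}. integral\<^sup>L lborel (F j))"
    using \<open>i < d\<close> by (simp add: prod.remove)
  also have "(\<Prod>j\<in>{..<d} - {i}. integral\<^sup>L lborel (F j)) = (\<integral>t. f t powr b \<partial>lborel) ^ (d - 1)"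
    using \<open>i < d\<close> by (simp add: F_def)
  finally show "(\<integral>x. g (x i) * fd f d x powr b \<partial>leb d)
           = (\<integral>t. g t * f t powr b \<partial>lborel) * (\<integral>t. f t powr b \<partial>lborel) ^ (d - 1)"
    by (simp add: F_def)
qed

lemma
  assumes pos: "\<forall>x. 0 < f x" and int: "integrable lborel (\<lambda>t. f t powr b)"
    and int_g: "integrable lborel (\<lambda>t. g t * f t powr b)"
  shows integrable_sum_coordinates_fd_powr:
      "integrable (leb d) (\<lambda>x. (\<Sum>i<d. g (x i)) * fd f d x powr b)"
    and integral_sum_coordinates_fd_powr: "(\<integral>x. (\<Sum>i<d. g (x i)) * fd f d x powr b \<partial>leb d)
           = d * (\<integral>t. g t * f t powr b \<partial>lborel) * (\<integral>t. f t powr b \<partial>lborel) ^ (d - 1)"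
proof -
  have int_i: "integrable (leb d) (\<lambda>x. g (x i) * fd f d x powr b)" if "i \<in> {..<d}" for i
    using integrable_coordinate_fd_powr[OF pos int int_g] that by simp
  show "integrable (leb d) (\<lambda>x. (\<Sum>i<d. g (x i)) * fd f d x powr b)"
    unfolding sum_distrib_right by (rule Bochner_Integration.integrable_sum) (rule int_i)
  show "(\<integral>x. (\<Sum>i<d. g (x i)) * fd f d x powr b \<partial>leb d)
      = d * (\<integral>t. g t * f t powr b \<partial>lborel) * (\<integral>t. f t powr b \<partial>lborel) ^ (d - 1)"
    unfolding sum_distrib_right using int_i integral_coordinate_fd_powr[OF pos int int_g]
    by (simp add: integral_sum)
qed

(* Markov's inequality for the sum of the |phi (x i)|, whose mean under the product density is d
   times a one-dimensional mean. *)
lemma tempered_sum_deviation_le: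
  fixes \<phi> :: "real \<Rightarrow> real"
  assumes pos: "\<forall>x. 0 < f x" and f_meas[measurable]: "f \<in> borel_measurable borel"
    and \<phi>_meas[measurable]: "\<phi> \<in> borel_measurable borel"
    and int: "integrable lborel (\<lambda>t. f t powr b)"
    and int_\<phi>: "integrable lborel (\<lambda>t. \<bar>\<phi> t\<bar> * f t powr b)"
    and Z_pos: "0 < (\<integral>t. f t powr b \<partial>lborel)" and "0 < \<eta>"
  shows "measure (tempered f d b) {x \<in> space (tempered f d b). \<eta> < \<bar>\<Sum>i<d. \<phi> (x i)\<bar>}
           \<le> d * (\<integral>t. \<bar>\<phi> t\<bar> * f t powr b \<partial>lborel) / ((\<integral>t. f t powr b \<partial>lborel) * \<eta>)"
proof -
  define Z where "Z = (\<integral>t. f t powr b \<partial>lborel)"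
  define P where "P = (\<integral>t. \<bar>\<phi> t\<bar> * f t powr b \<partial>lborel)"
  define A where "A = {x \<in> space (tempered f d b). \<eta> < \<bar>\<Sum>i<d. \<phi> (x i)\<bar>}"
  define u where "u x = (\<Sum>i<d. \<bar>\<phi> (x i)\<bar>) * fd f d x powr b / (Z ^ d * \<eta>)" for x
  have "0 < Z" using Z_pos by (simp add: Z_def)
  have u_int: "integrable (leb d) u"
    unfolding u_def by (intro integrable_divide integrable_sum_coordinates_fd_powr[OF pos int int_\<phi>])
  have "(\<integral>x. u x \<partial>leb d) = d * P * Z ^ (d - 1) / (Z ^ d * \<eta>)"
    unfolding u_def P_def Z_def by (simp add: integral_sum_coordinates_fd_powr[OF pos int int_\<phi>])
  also have "\<dots> = d * P / (Z * \<eta>)"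
    using \<open>0 < Z\<close> \<open>0 < \<eta>\<close> by (cases d) (simp_all add: field_simps)
  finally have u_integral: "(\<integral>x. u x \<partial>leb d) = d * P / (Z * \<eta>)" .
  have A_sets: "A \<in> sets (leb d)" unfolding A_def by (simp add: tempered_def leb_def)
  have "emeasure (tempered f d b) A = (\<integral>\<^sup>+x. ennreal (fd f d x powr b / Z ^ d) * indicator A x \<partial>leb d)"
    unfolding tempered_def integral_fd_powr[OF pos int] Z_def[symmetric]
    by (rule emeasure_density[OF _ A_sets]) (simp add: fd_def leb_def)
  also have "\<dots> \<le> (\<integral>\<^sup>+x. ennreal (u x) \<partial>leb d)"
  proof (rule nn_integral_mono)
    fix x
    show "ennreal (fd f d x powr b / Z ^ d) * indicator A x \<le> ennreal (u x)"
    proof (cases "x \<in> A")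
      case True
      then have "\<eta> < \<bar>\<Sum>i<d. \<phi> (x i)\<bar>" by (simp add: A_def)
      then have "\<eta> \<le> (\<Sum>i<d. \<bar>\<phi> (x i)\<bar>)"
        using sum_abs[of "\<lambda>i. \<phi> (x i)" "{..<d}"] by linarith
      then have "fd f d x powr b / Z ^ d * 1 \<le> fd f d x powr b / Z ^ d * ((\<Sum>i<d. \<bar>\<phi> (x i)\<bar>) / \<eta>)"
        using \<open>0 < Z\<close> \<open>0 < \<eta>\<close> by (intro mult_left_mono) simp_all
      then show ?thesis using True by (simp add: u_def ennreal_leI mult.commute)
    qed simp
  qed
  also have "\<dots> = ennreal (d * P / (Z * \<eta>))"
    using \<open>0 < Z\<close> \<open>0 < \<eta>\<close>
    by (subst nn_integral_eq_integral[OF u_int]) (auto simp: u_def u_integral sum_nonneg)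
  finally have "emeasure (tempered f d b) A \<le> ennreal (d * P / (Z * \<eta>))" .
  moreover have "0 \<le> d * P / (Z * \<eta>)"
    using \<open>0 < Z\<close> \<open>0 < \<eta>\<close> by (simp add: P_def)
  ultimately show ?thesis
    by (simp add: A_def P_def Z_def measure_def enn2real_leI)
qed

lemma tempered_sum_deviation_le_weight:
  fixes \<phi> w :: "real \<Rightarrow> real"
  assumes pos: "\<forall>x. 0 < f x" and f_meas[measurable]: "f \<in> borel_measurable borel"
    and \<phi>_meas[measurable]: "\<phi> \<in> borel_measurable borel" and \<phi>_bound: "\<And>t. \<bar>\<phi> t\<bar> \<le> \<delta> * w t"
    and int: "integrable lborel (\<lambda>t. f t powr b)"
    and int_w: "integrable lborel (\<lambda>t. w t * f t powr b)"
    and Z_pos: "0 < (\<integral>t. f t powr b \<partial>lborel)" and "0 < \<eta>"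
  shows "measure (tempered f d b) {x \<in> space (tempered f d b). \<eta> < \<bar>\<Sum>i<d. \<phi> (x i)\<bar>}
           \<le> d * \<delta> * ((\<integral>t. w t * f t powr b \<partial>lborel) / (\<integral>t. f t powr b \<partial>lborel)) / \<eta>"
proof -
  have \<phi>_le: "\<bar>\<phi> t\<bar> * f t powr b \<le> \<delta> * (w t * f t powr b)" for t
    using \<phi>_bound[of t] by (simp add: mult_right_mono flip: mult.assoc)
  have int_\<phi>: "integrable lborel (\<lambda>t. \<bar>\<phi> t\<bar> * f t powr b)"
  proof (rule Bochner_Integration.integrable_bound[OF integrable_mult_right[OF int_w]])
    show "AE t in lborel. norm (\<bar>\<phi> t\<bar> * f t powr b) \<le> norm (\<delta> * (w t * f t powr b))"
      using \<phi>_le by (intro AE_I2) (simp add: order_trans[OF _ abs_ge_self])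
  qed (use int_w in \<open>simp add: borel_measurable_integrable\<close>)
  have "(\<integral>t. \<bar>\<phi> t\<bar> * f t powr b \<partial>lborel) \<le> \<delta> * (\<integral>t. w t * f t powr b \<partial>lborel)"
    using integral_mono[OF int_\<phi> integrable_mult_right[OF int_w] \<phi>_le] by simp
  then have "d * (\<integral>t. \<bar>\<phi> t\<bar> * f t powr b \<partial>lborel) / ((\<integral>t. f t powr b \<partial>lborel) * \<eta>)
      \<le> d * (\<delta> * (\<integral>t. w t * f t powr b \<partial>lborel)) / ((\<integral>t. f t powr b \<partial>lborel) * \<eta>)"
    using Z_pos \<open>0 < \<eta>\<close> by (intro divide_right_mono mult_left_mono) auto
  then show ?thesis
    using tempered_sum_deviation_le[OF pos f_meas \<phi>_meas int int_\<phi> Z_pos \<open>0 < \<eta>\<close>, of d]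
    by (simp add: field_simps)
qed

lemma integral_weight_powr_le:
  fixes f w :: "real \<Rightarrow> real"
  assumes pos: "\<forall>t. 0 < f t" and bound: "\<forall>t. f t \<le> F" and w: "\<forall>t. 0 \<le> w t"
    and "b0 \<le> b" "b - b0 \<le> L"
    and int: "integrable lborel (\<lambda>t. w t * f t powr b)"
    and int0: "integrable lborel (\<lambda>t. w t * f t powr b0)"
  shows "(\<integral>t. w t * f t powr b \<partial>lborel) \<le> max 1 F powr L * (\<integral>t. w t * f t powr b0 \<partial>lborel)"
proof -
  have "w t * f t powr b \<le> max 1 F powr L * (w t * f t powr b0)" for t
  proof -
    have "f t powr b = f t powr (b - b0) * f t powr b0" using powr_add[of "f t" "b - b0" b0] by simp
    also have "\<dots> \<le> max 1 F powr L * f t powr b0"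
    proof (rule mult_right_mono)
      have "f t powr (b - b0) \<le> max 1 F powr (b - b0)"
        using pos bound \<open>b0 \<le> b\<close> by (intro powr_mono2) (auto simp: less_imp_le max.coboundedI2)
      also have "\<dots> \<le> max 1 F powr L" using \<open>b - b0 \<le> L\<close> by (intro powr_mono) auto
      finally show "f t powr (b - b0) \<le> max 1 F powr L" .
    qed simp
    finally show ?thesis using w by (simp add: mult_left_mono mult.left_commute)
  qed
  then have "(\<integral>t. w t * f t powr b \<partial>lborel) \<le> (\<integral>t. max 1 F powr L * (w t * f t powr b0) \<partial>lborel)"
    using int int0 by (intro integral_mono) auto
  then show ?thesis by simp
qed

lemma integral_powr_pos:
  fixes f :: "real \<Rightarrow> real"
  assumes pos: "\<forall>t. 0 < f t" and f_meas: "f \<in> borel_measurable borel"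
    and int: "integrable lborel (\<lambda>t. f t powr b)"
  shows "0 < (\<integral>t. f t powr b \<partial>lborel)"
proof -
  have "(\<integral>t. f t powr b \<partial>lborel) \<noteq> 0"
  proof
    assume "(\<integral>t. f t powr b \<partial>lborel) = 0"
    then have "AE t in lborel. f t powr b = 0"
      using integral_nonneg_eq_0_iff_AE[OF int] by simp
    then have "AE t in lborel :: real measure. False"
      by (rule eventually_mono) (use pos in \<open>auto simp: less_imp_neq[symmetric]\<close>)
    then have "ae_filter (lborel :: real measure) = bot" by (simp add: trivial_limit_def)
    then show False by (simp add: ae_filter_eq_bot_iff)
  qed
  moreover have "0 \<le> (\<integral>t. f t powr b \<partial>lborel)" by simp
  ultimately show ?thesis by linarith
qed


lemma integrable_powr_of_weight:
  fixes f w :: "real \<Rightarrow> real"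
  assumes "\<forall>t. 1 \<le> w t" "integrable lborel (\<lambda>t. w t * f t powr c)"
    and [measurable]: "f \<in> borel_measurable borel"
  shows "integrable lborel (\<lambda>t. f t powr c)"
proof (rule Bochner_Integration.integrable_bound[OF assms(2)])
  show "AE t in lborel. norm (f t powr c) \<le> norm (w t * f t powr c)"
  proof (rule AE_I2)
    fix t
    have "1 * f t powr c \<le> w t * f t powr c" using assms(1) by (intro mult_right_mono) auto
    then show "norm (f t powr c) \<le> norm (w t * f t powr c)" by simp
  qed
qed measurable

lemma weight_ratio_uniform_le:
  fixes f w :: "real \<Rightarrow> real"
  assumes pos: "\<forall>t. 0 < f t" and bounded: "\<forall>t. f t \<le> F"
    and f_meas: "f \<in> borel_measurable borel" and w_ge: "\<forall>t. 1 \<le> w t"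
    and int_w: "\<And>c. 0 < c \<Longrightarrow> integrable lborel (\<lambda>t. w t * f t powr c)"
    and "0 < bmin" "b \<in> {bmin..bmax}"
  shows "0 < (\<integral>t. f t powr b \<partial>lborel)"
    and "(\<integral>t. w t * f t powr b \<partial>lborel) / (\<integral>t. f t powr b \<partial>lborel)
           \<le> (max 1 F powr (bmax - bmin))^2 * (\<integral>t. w t * f t powr bmin \<partial>lborel)
               / (\<integral>t. f t powr bmax \<partial>lborel)"
proof -
  define K where "K = max 1 F powr (bmax - bmin)"
  have "0 < K" by (simp add: K_def)
  have "0 < b" using assms(6,7) by simp
  have int_f: "integrable lborel (\<lambda>t. f t powr c)" if "0 < c" for c
    using integrable_powr_of_weight[OF w_ge int_w[OF that] f_meas] .
  have Z_pos: "0 < (\<integral>t. f t powr bmax \<partial>lborel)"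
    using assms(6,7) by (intro integral_powr_pos pos f_meas int_f) auto
  have "(\<integral>t. 1 * f t powr bmax \<partial>lborel) \<le> K * (\<integral>t. 1 * f t powr b \<partial>lborel)"
    unfolding K_def using assms(6,7) int_f[OF \<open>0 < b\<close>] int_f[of bmax]
    by (intro integral_weight_powr_le[OF pos bounded]) auto
  then have Z_le: "(\<integral>t. f t powr bmax \<partial>lborel) / K \<le> (\<integral>t. f t powr b \<partial>lborel)"
    using \<open>0 < K\<close> by (simp add: divide_le_eq mult.commute)
  then show Zb_pos: "0 < (\<integral>t. f t powr b \<partial>lborel)"
    using Z_pos \<open>0 < K\<close> by (meson divide_pos_pos less_le_trans)
  have W_le: "(\<integral>t. w t * f t powr b \<partial>lborel) \<le> K * (\<integral>t. w t * f t powr bmin \<partial>lborel)"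
    unfolding K_def using w_ge assms(6,7) int_w[OF \<open>0 < b\<close>] int_w[OF \<open>0 < bmin\<close>]
    by (intro integral_weight_powr_le[OF pos bounded]) (auto intro: order.trans[OF zero_le_one])
  have "0 \<le> (\<integral>t. w t * f t powr bmin \<partial>lborel)"
    using w_ge by (intro integral_nonneg_AE AE_I2 mult_nonneg_nonneg) (auto intro: order.trans[OF zero_le_one])
  then have "(\<integral>t. w t * f t powr b \<partial>lborel) / (\<integral>t. f t powr b \<partial>lborel)
      \<le> K * (\<integral>t. w t * f t powr bmin \<partial>lborel) / ((\<integral>t. f t powr bmax \<partial>lborel) / K)"
    using W_le Z_le Z_pos \<open>0 < K\<close> by (intro frac_le) auto
  then show "(\<integral>t. w t * f t powr b \<partial>lborel) / (\<integral>t. f t powr b \<partial>lborel)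
      \<le> K^2 * (\<integral>t. w t * f t powr bmin \<partial>lborel) / (\<integral>t. f t powr bmax \<partial>lborel)"
    by (simp add: power2_eq_square field_simps)
qed

lemma tempered_sum_tendsto_zero:
  fixes f w :: "real \<Rightarrow> real" and \<phi> :: "nat \<Rightarrow> real \<Rightarrow> real" and \<delta> b :: "nat \<Rightarrow> real"
  assumes pos: "\<forall>t. 0 < f t" and bounded: "\<forall>t. f t \<le> F"
    and f_meas: "f \<in> borel_measurable borel"
    and w_ge: "\<forall>t. 1 \<le> w t" and int_w: "\<And>c. 0 < c \<Longrightarrow> integrable lborel (\<lambda>t. w t * f t powr c)"
    and \<phi>_meas: "\<And>d. \<phi> d \<in> borel_measurable borel" and \<phi>_bound: "\<And>d t. \<bar>\<phi> d t\<bar> \<le> \<delta> d * w t"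
    and \<delta>: "((\<lambda>d. real d * \<delta> d) \<longlongrightarrow> 0) sequentially"
    and b: "0 < bmin" "\<And>d. b d \<in> {bmin..bmax}" and "0 < \<eta>"
  shows "((\<lambda>d. measure (tempered f d (b d))
            {x \<in> space (tempered f d (b d)). \<eta> < \<bar>\<Sum>i<d. \<phi> d (x i)\<bar>}) \<longlongrightarrow> 0) sequentially"
proof -
  define C where "C = (max 1 F powr (bmax - bmin))^2 * (\<integral>t. w t * f t powr bmin \<partial>lborel)
      / (\<integral>t. f t powr bmax \<partial>lborel) / \<eta>"
  have bound: "measure (tempered f d (b d)) {x \<in> space (tempered f d (b d)). \<eta> < \<bar>\<Sum>i<d. \<phi> d (x i)\<bar>}
      \<le> real d * \<delta> d * C" for d
  proof -
    have "0 < b d" using b by (meson atLeastAtMost_iff less_le_trans)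
    have "0 \<le> \<delta> d * w 0" using \<phi>_bound[of d 0] abs_ge_zero order_trans by blast
    then have "0 \<le> \<delta> d" using w_ge[rule_format, of 0] by (auto simp: zero_le_mult_iff)
    note ratio = weight_ratio_uniform_le[OF pos bounded f_meas w_ge int_w b(1) b(2)[of d]]
    have "measure (tempered f d (b d)) {x \<in> space (tempered f d (b d)). \<eta> < \<bar>\<Sum>i<d. \<phi> d (x i)\<bar>}
        \<le> d * \<delta> d * ((\<integral>t. w t * f t powr b d \<partial>lborel) / (\<integral>t. f t powr b d \<partial>lborel)) / \<eta>"
      by (rule tempered_sum_deviation_le_weight[OF pos f_meas \<phi>_meas \<phi>_bound
            integrable_powr_of_weight[OF w_ge int_w[OF \<open>0 < b d\<close>] f_meas] int_w[OF \<open>0 < b d\<close>]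
            ratio(1) \<open>0 < \<eta>\<close>])
    also have "\<dots> = real d * \<delta> d * ((\<integral>t. w t * f t powr b d \<partial>lborel) / (\<integral>t. f t powr b d \<partial>lborel) / \<eta>)"
      by simp
    also have "\<dots> \<le> real d * \<delta> d * C"
      unfolding C_def using ratio(2) \<open>0 \<le> \<delta> d\<close> \<open>0 < \<eta>\<close> by (intro mult_left_mono divide_right_mono) auto
    finally show ?thesis .
  qed
  have "((\<lambda>d. real d * \<delta> d * C) \<longlongrightarrow> 0 * C) sequentially"
    by (intro tendsto_mult \<delta> tendsto_const)
  then have lim: "((\<lambda>d. real d * \<delta> d * C) \<longlongrightarrow> 0) sequentially"
    by simp
  show ?thesis
  proof (rule tendsto_sandwich[OF _ _ tendsto_const lim])
    show "\<forall>\<^sub>F d in sequentially. 0 \<le> measure (tempered f d (b d))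
        {x \<in> space (tempered f d (b d)). \<eta> < \<bar>\<Sum>i<d. \<phi> d (x i)\<bar>}"
      by simp
    show "\<forall>\<^sub>F d in sequentially. measure (tempered f d (b d))
        {x \<in> space (tempered f d (b d)). \<eta> < \<bar>\<Sum>i<d. \<phi> d (x i)\<bar>} \<le> real d * \<delta> d * C"
      using bound by (intro always_eventually allI)
  qed
qed

section \<open>The log acceptance ratio\<close>

lemma divide_sqrt_nat_le: "0 \<le> l \<Longrightarrow> l / sqrt (real d) \<le> l"
  by (cases "d = 0") (simp_all add: divide_le_eq mult_le_cancel_left1)

lemma ln_fd: "\<forall>x. 0 < f x \<Longrightarrow> ln (fd f d z) = (\<Sum>i<d. hfun f (z i))"
  unfolding fd_def hfun_def by (rule ln_prod) (auto simp: less_imp_neq[symmetric])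

lemma Bratio_expansion:
  assumes pos: "\<forall>x. 0 < f x"
  shows "Bratio f mu d \<beta> (\<beta> + \<epsilon>) x y =
     \<epsilon> * (\<Sum>i<d. hfun f (x i) - hfun f (y i) + (kfun f mu (y i) - kfun f mu (x i)) / 2)
     + \<epsilon>^2 / (8 * \<beta>) * (\<Sum>i<d. rfun f mu (x i) - kfun f mu (x i) + rfun f mu (y i) - kfun f mu (y i))
     + ((\<Sum>i<d. dilation_remainder (hfun f) mu (\<beta> + \<epsilon>) (sqrt (\<beta> / (\<beta> + \<epsilon>)))
                 (- \<epsilon> / 2 - \<epsilon>^2 / (8 * \<beta>)) (\<epsilon>^2 / (8 * \<beta>)) (x i))
       + (\<Sum>i<d. dilation_remainder (hfun f) mu \<beta> (sqrt ((\<beta> + \<epsilon>) / \<beta>))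
                 (\<epsilon> / 2 - \<epsilon>^2 / (8 * \<beta>)) (\<epsilon>^2 / (8 * \<beta>)) (y i)))"
    (is "_ = ?rhs")
proof -
  have fd_pos: "0 < fd f d z" for z
    using pos unfolding fd_def by (simp add: prod_pos)
  then have fd_ne: "fd f d z \<noteq> 0" for z
    by (simp add: less_imp_neq[symmetric])
  have "Bratio f mu d \<beta> (\<beta> + \<epsilon>) x y =
      (\<beta> + \<epsilon>) * (\<Sum>i<d. hfun f (gmap mu x \<beta> (\<beta> + \<epsilon>) i)) + \<beta> * (\<Sum>i<d. hfun f (gmap mu y (\<beta> + \<epsilon>) \<beta> i))
      - (\<beta> + \<epsilon>) * (\<Sum>i<d. hfun f (y i)) - \<beta> * (\<Sum>i<d. hfun f (x i))"
    unfolding Bratio_def using fd_pos fd_ne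
    by (simp add: ln_mult ln_div ln_fd[OF pos])
  also have "\<dots> = ?rhs"
    unfolding sum_distrib_left sum_subtractf[symmetric] sum.distrib[symmetric]
    by (intro sum.cong)
      (simp_all add: dilation_remainder_def kfun_def rfun_def gmap_def algebra_simps diff_divide_distrib
          add_divide_distrib)
  finally show ?thesis .
qed

lemma borel_measurable_dilation_remainder:
  assumes "continuous_on UNIV u" "continuous_on UNIV (deriv u)" "continuous_on UNIV (deriv (deriv u))"
  shows "dilation_remainder u a q s c e \<in> borel_measurable borel"
proof -
  have [measurable]: "u \<in> borel_measurable borel" "deriv u \<in> borel_measurable borel"
    "deriv (deriv u) \<in> borel_measurable borel"
    using assms by (simp_all add: borel_measurable_continuous_onI)
  show ?thesis unfolding dilation_remainder_def[abs_def] by measurable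
qed

lemma borel_measurable_hfun_dilation_remainder:
  assumes "C4 f" "\<forall>x. 0 < f x"
  shows "dilation_remainder (hfun f) a q s c e \<in> borel_measurable borel"
  using continuous_on_funpow_deriv[OF C4_hfun_has_derivs_upto[OF assms], of 0]
    continuous_on_funpow_deriv[OF C4_hfun_has_derivs_upto[OF assms], of 1]
    continuous_on_funpow_deriv[OF C4_hfun_has_derivs_upto[OF assms], of 2]
  by (intro borel_measurable_dilation_remainder) (simp_all add: numeral_2_eq_2)

lemma hfun_dilation_remainder_sum_tendsto_zero:
  fixes f :: "real \<Rightarrow> real" and q s c e b :: "nat \<Rightarrow> real"
  assumes pos: "\<forall>x. 0 < f x" and C4: "C4 f" and unimodal: "unimodal_at f mu"
    and regvar: "regularly_varying (\<lambda>t. - ln (f t))"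
    and M: "\<forall>x. \<bar>(deriv ^^ 4) (hfun f) x\<bar> \<le> M"
    and defect: "((\<lambda>d. real d * dilation_defect (q d) (s d) (c d) (e d)) \<longlongrightarrow> 0) sequentially"
    and b: "0 < bmin" "\<And>d. b d \<in> {bmin..bmax}" and "0 < \<eta>"
  shows "((\<lambda>d. measure (tempered f d (b d)) {x \<in> space (tempered f d (b d)).
            \<eta> < \<bar>\<Sum>i<d. dilation_remainder (hfun f) mu (q d) (s d) (c d) (e d) (x i)\<bar>}) \<longlongrightarrow> 0)
           sequentially"
proof -
  define A where "A = (\<Sum>m<4. \<bar>(deriv ^^ m) (hfun f) mu\<bar>) + M"
  define w where "w t = (1 + \<bar>t - mu\<bar>) ^ 4" for t
  have bound: "\<bar>dilation_remainder (hfun f) mu (q d) (s d) (c d) (e d) t\<bar>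
      \<le> (dilation_defect (q d) (s d) (c d) (e d) * A) * w t" for d t
    using dilation_remainder_bound[OF C4_hfun_has_derivs_upto[OF C4 pos] M]
    by (simp add: A_def w_def mult.assoc)
  have f_meas: "f \<in> borel_measurable borel"
    using continuous_on_funpow_deriv[OF C4_has_derivs_upto[OF C4], of 0]
    by (simp add: borel_measurable_continuous_onI)
  have "((\<lambda>d. real d * (dilation_defect (q d) (s d) (c d) (e d) * A)) \<longlongrightarrow> 0) sequentially"
    using tendsto_mult_left_zero[OF defect, of A] by (simp add: mult.assoc)
  then show ?thesis
    using unimodal_at_le_mode[OF unimodal] integrable_poly_weight_powr[OF pos unimodal regvar f_meas]
      borel_measurable_hfun_dilation_remainder[OF C4 pos]
    by (intro tempered_sum_tendsto_zero[OF pos _ f_meas _ _ _ bound _ b \<open>0 < \<eta>\<close>])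
      (auto simp: w_def)
qed

theorem lemma1:
  fixes f :: "real \<Rightarrow> real" and mu \<beta> ell M :: real
  assumes pos: "\<forall>x. f x > 0"
    and C4: "C4 f"
    and unimodal: "unimodal_at f mu"
    and regvar: "regularly_varying (\<lambda>t. - ln (f t))"
    and M: "M > 0" "\<forall>x. \<bar>(deriv ^^ 4) (hfun f) x\<bar> < M"
    and beta: "\<beta> > 0" and ellpos: "ell > 0"
  shows "\<exists>Tx Ty :: nat \<Rightarrow> (nat \<Rightarrow> real) \<Rightarrow> real.
     (\<forall>d\<ge>1. \<forall>x y. let \<epsilon> = ell / sqrt (real d) in
        Bratio f mu d \<beta> (\<beta> + \<epsilon>) x y =
          \<epsilon> * (\<Sum>i<d. hfun f (x i) - hfun f (y i) + (kfun f mu (y i) - kfun f mu (x i)) / 2)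
          + \<epsilon>^2 / (8 * \<beta>) * (\<Sum>i<d. rfun f mu (x i) - kfun f mu (x i) + rfun f mu (y i) - kfun f mu (y i))
          + (Tx d x + Ty d y))
   \<and> (\<forall>d. Tx d \<in> borel_measurable (leb d) \<and> Ty d \<in> borel_measurable (leb d))
   \<and> (\<forall>e>0. ((\<lambda>d. measure (tempered f d \<beta>)
                 {x \<in> space (tempered f d \<beta>). \<bar>Tx d x\<bar> > e}) \<longlongrightarrow> 0) sequentially)
   \<and> (\<forall>e>0. ((\<lambda>d. measure (tempered f d (\<beta> + ell / sqrt (real d)))
                 {y \<in> space (tempered f d (\<beta> + ell / sqrt (real d))). \<bar>Ty d y\<bar> > e}) \<longlongrightarrow> 0) sequentially)"
proof -
  define \<epsilon> where "\<epsilon> d = ell / sqrt (real d)" for d :: nat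
  define Tx where "Tx d x = (\<Sum>i<d. dilation_remainder (hfun f) mu (\<beta> + \<epsilon> d) (sqrt (\<beta> / (\<beta> + \<epsilon> d)))
      (- \<epsilon> d / 2 - (\<epsilon> d)^2 / (8 * \<beta>)) ((\<epsilon> d)^2 / (8 * \<beta>)) (x i))" for d x
  define Ty where "Ty d y = (\<Sum>i<d. dilation_remainder (hfun f) mu \<beta> (sqrt ((\<beta> + \<epsilon> d) / \<beta>))
      (\<epsilon> d / 2 - (\<epsilon> d)^2 / (8 * \<beta>)) ((\<epsilon> d)^2 / (8 * \<beta>)) (y i))" for d y
  have [measurable]: "dilation_remainder (hfun f) mu q s c e \<in> borel_measurable borel" for q s c e
    by (rule borel_measurable_hfun_dilation_remainder[OF C4 pos])
  have M': "\<forall>x. \<bar>(deriv ^^ 4) (hfun f) x\<bar> \<le> M" using M(2) by (simp add: less_imp_le)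
  have \<epsilon>_bounds: "\<beta> + \<epsilon> d \<in> {\<beta>..\<beta> + ell}" for d
    using divide_sqrt_nat_le[of ell d] ellpos by (simp add: \<epsilon>_def)
  have "Bratio f mu d \<beta> (\<beta> + \<epsilon> d) x y =
      \<epsilon> d * (\<Sum>i<d. hfun f (x i) - hfun f (y i) + (kfun f mu (y i) - kfun f mu (x i)) / 2)
      + (\<epsilon> d)^2 / (8 * \<beta>) * (\<Sum>i<d. rfun f mu (x i) - kfun f mu (x i) + rfun f mu (y i) - kfun f mu (y i))
      + (Tx d x + Ty d y)" for d x y
    unfolding Tx_def Ty_def by (rule Bratio_expansion[OF pos])
  moreover have "Tx d \<in> borel_measurable (leb d)" "Ty d \<in> borel_measurable (leb d)" for d
    unfolding Tx_def Ty_def leb_def by measurable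
  moreover have "((\<lambda>d. measure (tempered f d \<beta>) {x \<in> space (tempered f d \<beta>). \<eta> < \<bar>Tx d x\<bar>}) \<longlongrightarrow> 0)
      sequentially" if "0 < \<eta>" for \<eta>
    unfolding Tx_def \<epsilon>_def
    by (rule hfun_dilation_remainder_sum_tendsto_zero[where bmax = \<beta>, OF pos C4 unimodal regvar M'
          contraction_defect_tendsto[OF beta ellpos] beta _ that]) simp
  moreover have "((\<lambda>d. measure (tempered f d (\<beta> + \<epsilon> d))
      {y \<in> space (tempered f d (\<beta> + \<epsilon> d)). \<eta> < \<bar>Ty d y\<bar>}) \<longlongrightarrow> 0) sequentially" if "0 < \<eta>" for \<eta>
    unfolding Ty_def
    by (rule hfun_dilation_remainder_sum_tendsto_zero[OF pos C4 unimodal regvar M'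
          expansion_defect_tendsto[OF beta ellpos] beta \<epsilon>_bounds that, unfolded \<epsilon>_def[symmetric]])
  ultimately show ?thesis
    unfolding Let_def \<epsilon>_def[symmetric] by blast
qed

end
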